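(* Let $K>0$. There exist $K'>0$ and $\epsilon_0>0$ such that for every $0<\epsilon\le\epsilon_0$ and every corner tensor $P$ with $\|P\|\leq K\epsilon$, the operator $B$ on $V\otimes V$ defined below satisfies: (1) there exist a Hilbert space $V_B$ with orthonormal basis $(f_m)$ and three-index Hilbert–Schmidt tensors $B_u,B_d$ with $\|B_u\|,\|B_d\|\leq K'\epsilon$ such that $B_{(i_1i_2),(k_1k_2)}=\sum_m (B_u)_{i_1k_1m}(B_d)_{i_2k_2m}$ for all $i_1,i_2,k_1,k_2\geq0$; (2) for $C=\exp(B)-B-I$ there exist a Hilbert space $V_C$ with orthonormal basis $(g_m)$ and three-index Hilbert–Schmidt tensors $C_u,C_d$ with $\|C_u\|,\|C_d\|\leq K'\epsilon^2$ such that $C_{(i_1i_2),(k_1k_2)}=\sum_m (C_u)_{i_1k_1m}(C_d)_{i_2k_2m}$; and the same holds for $\tilde C=\exp(-B)+B-I$ with tensors $\tilde C_u,\tilde C_d$ of norm $\leq K'\epsilon^2$.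
   Context: $V$ is a real separable infinite-dimensional Hilbert space with orthonormal basis $(e_i)_{i\geq0}$; $V\otimes V$ has orthonormal basis $e_a\otimes e_b$, indexed by pairs, and operator matrix entries are $B_{(i_1i_2),(k_1k_2)}=\langle e_{i_1}\otimes e_{i_2},B(e_{k_1}\otimes e_{k_2})\rangle$. Tensors have finite Hilbert–Schmidt norm (square root of the sum of squared components). A corner tensor is a 4-tensor $P=(P_{ijkl})$ (indices for right, top, left, bottom legs) whose only possibly nonzero components are $P_{ij00},P_{0jk0},P_{00kl},P_{i00l}$ with both displayed indices $\geq1$. Define, for $i,j\geq1$, $l_{ij}=\sum_{c\geq1}P_{0,0,i,c}P_{0,c,j,0}$ and $r_{ij}=\sum_{d\geq1}P_{i,0,0,d}P_{j,d,0,0}$, and set $l_{ij}=r_{ij}=0$ if $i=0$ or $j=0$. Let $|l\rangle=\sum_{ij}l_{ij}\,e_i\otimes e_j$, $\langle r|=\sum_{ij}r_{ij}\langle e_i\otimes e_j|$, and $B=|l\rangle\langle e_0\otimes e_0|-|e_0\otimes e_0\rangle\langle r|$. *)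

theory Defs
  imports "HOL-Analysis.Analysis"
begin

text \<open>Vectors of V are indexed by nat (basis e_i); basis of V (x) V indexed by nat \<times> nat.
  Operators on V (x) V are represented by their matrices (nat \<times> nat) \<Rightarrow> (nat \<times> nat) \<Rightarrow> real.\<close>

type_synonym tensor3 = "nat \<Rightarrow> nat \<Rightarrow> nat \<Rightarrow> real"
type_synonym tensor4 = "nat \<Rightarrow> nat \<Rightarrow> nat \<Rightarrow> nat \<Rightarrow> real"
type_synonym opmat = "nat \<times> nat \<Rightarrow> nat \<times> nat \<Rightarrow> real"

definition is_hs3 :: "tensor3 \<Rightarrow> bool" where
  "is_hs3 T \<longleftrightarrow> (\<lambda>(i, k, m). (T i k m)\<^sup>2) summable_on UNIV"

definition hs_norm3 :: "tensor3 \<Rightarrow> real" where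
  "hs_norm3 T = sqrt (\<Sum>\<^sub>\<infinity>(i, k, m) \<in> UNIV. (T i k m)\<^sup>2)"

definition is_hs4 :: "tensor4 \<Rightarrow> bool" where
  "is_hs4 P \<longleftrightarrow> (\<lambda>(i, j, k, l). (P i j k l)\<^sup>2) summable_on UNIV"

definition hs_norm4 :: "tensor4 \<Rightarrow> real" where
  "hs_norm4 P = sqrt (\<Sum>\<^sub>\<infinity>(i, j, k, l) \<in> UNIV. (P i j k l)\<^sup>2)"

text \<open>Corner tensor: only P_{ij00}, P_{0jk0}, P_{00kl}, P_{i00l} with both displayed indices \<ge> 1
  may be nonzero (legs: right, top, left, bottom).\<close>
definition corner_tensor :: "tensor4 \<Rightarrow> bool" where
  "corner_tensor P \<longleftrightarrow> is_hs4 P \<and>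
     (\<forall>i j k l. P i j k l \<noteq> 0 \<longrightarrow>
        (i \<ge> 1 \<and> j \<ge> 1 \<and> k = 0 \<and> l = 0) \<or>
        (i = 0 \<and> j \<ge> 1 \<and> k \<ge> 1 \<and> l = 0) \<or>
        (i = 0 \<and> j = 0 \<and> k \<ge> 1 \<and> l \<ge> 1) \<or>
        (i \<ge> 1 \<and> j = 0 \<and> k = 0 \<and> l \<ge> 1))"

definition lvec :: "tensor4 \<Rightarrow> nat \<Rightarrow> nat \<Rightarrow> real" where
  "lvec P i j = (if i = 0 \<or> j = 0 then 0
                 else (\<Sum>\<^sub>\<infinity>c \<in> {1..}. P 0 0 i c * P 0 c j 0))"

definition rvec :: "tensor4 \<Rightarrow> nat \<Rightarrow> nat \<Rightarrow> real" where
  "rvec P i j = (if i = 0 \<or> j = 0 then 0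
                 else (\<Sum>\<^sub>\<infinity>d \<in> {1..}. P i 0 0 d * P j d 0 0))"

text \<open>B = |l><e0 (x) e0| - |e0 (x) e0><r|, matrix entries B_{(i1 i2),(k1 k2)}.\<close>
definition Bmat :: "tensor4 \<Rightarrow> opmat" where
  "Bmat P = (\<lambda>(i1, i2) (k1, k2).
      lvec P i1 i2 * (if k1 = 0 \<and> k2 = 0 then 1 else 0)
    - (if i1 = 0 \<and> i2 = 0 then 1 else 0) * rvec P k1 k2)"

definition id_mat :: opmat where
  "id_mat = (\<lambda>x z. if x = z then 1 else 0)"

definition mat_mult :: "opmat \<Rightarrow> opmat \<Rightarrow> opmat" where
  "mat_mult A C = (\<lambda>x z. \<Sum>\<^sub>\<infinity>y \<in> UNIV. A x y * C y z)"

fun mat_pow :: "opmat \<Rightarrow> nat \<Rightarrow> opmat" where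
  "mat_pow A 0 = id_mat"
| "mat_pow A (Suc n) = mat_mult A (mat_pow A n)"

definition mat_exp :: "opmat \<Rightarrow> opmat" where
  "mat_exp A = (\<lambda>x z. \<Sum>n. mat_pow A n x z / fact n)"

definition factorises :: "opmat \<Rightarrow> tensor3 \<Rightarrow> tensor3 \<Rightarrow> bool" where
  "factorises A U D \<longleftrightarrow>
     (\<forall>i1 i2 k1 k2. ((\<lambda>m. U i1 k1 m * D i2 k2 m) has_sum A (i1, i2) (k1, k2)) UNIV)"

end

theory Submission
  imports Defs
begin

text \<open>
  Write \<open>e00 = e\<^sub>0 \<otimes> e\<^sub>0\<close>, so that \<open>B = |l\<rangle>\<langle>e00| - |e00\<rangle>\<langle>r|\<close>. As \<open>l\<close> and \<open>r\<close> vanish at \<open>(0, 0)\<close>,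
  \<open>B\<^sup>2 = - |l\<rangle>\<langle>r| - s |e00\<rangle>\<langle>e00|\<close> with \<open>s = \<langle>r|l\<rangle>\<close>, and \<open>B\<^sup>3 = - s B\<close>. Hence
  \<open>exp B = I + \<Phi>(s) B + \<Psi>(s) B\<^sup>2\<close> with \<open>|\<Phi>(s) - 1| \<le> |s| exp 1\<close> and \<open>|\<Psi>(s)| \<le> exp 1\<close> when \<open>|s| \<le> 1\<close>, so
  both \<open>B\<close> and \<open>exp B - B - I\<close> are linear combinations of outer products \<open>|x\<rangle>\<langle>y|\<close>.

  Each of \<open>l\<close>, \<open>r\<close>, \<open>e00\<close> is a matrix product \<open>x(i, j) = \<Sum>c. p(i, c) q(j, c)\<close> of blocks of \<open>P\<close>
  (or of \<open>e00\<close> itself), and then \<open>|x\<rangle>\<langle>y|\<close> factorises through \<open>U(i, k, (c, d)) = p(i, c) u(k, d)\<close>,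
  whose squared Hilbert--Schmidt norm is the product of those of \<open>p\<close> and \<open>u\<close>. Factorisations
  of a sum are obtained by interleaving the third index, and a scalar \<open>c\<close> is split as
  \<open>(sgn c \<surd>|c|) \<cdot> \<surd>|c|\<close>, so squared norms add up with weights \<open>|c|\<close>. Every block has
  norm at most \<open>\<eta> = K\<epsilon>\<close> and \<open>|s| \<le> \<eta>\<^sup>4\<close>, which gives squared norms \<open>O(\<eta>\<^sup>2)\<close> for \<open>B\<close>
  and \<open>O(\<eta>\<^sup>4)\<close> for the remainders.
\<close>

section \<open>Infinite sums of reals\<close>

lemma nonneg_summable_on_comp_inj:
  fixes g :: "'a \<Rightarrow> real"
  assumes g: "g summable_on UNIV" and g_nonneg: "\<And>y. g y \<ge> 0" and h: "inj h"
  shows "(g \<circ> h) summable_on UNIV \<and> infsum (g \<circ> h) UNIV \<le> infsum g UNIV"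
proof
  have range: "g summable_on range h"
    using summable_on_subset_banach[OF g] by blast
  then show "(g \<circ> h) summable_on UNIV"
    using summable_on_reindex[of h UNIV g] h by simp
  have "infsum (g \<circ> h) UNIV = infsum g (range h)"
    using infsum_reindex[of h UNIV g] h by simp
  also have "\<dots> \<le> infsum g UNIV"
    by (rule infsum_mono2[OF range g]) (auto simp: g_nonneg)
  finally show "infsum (g \<circ> h) UNIV \<le> infsum g UNIV" .
qed

lemma infsum_Cauchy_Schwarz:
  fixes x y :: "'a \<Rightarrow> real"
  assumes x: "(\<lambda>c. (x c)\<^sup>2) summable_on A" and y: "(\<lambda>c. (y c)\<^sup>2) summable_on A"
  shows "(\<lambda>c. x c * y c) summable_on A"
    and "(\<Sum>\<^sub>\<infinity>c\<in>A. x c * y c)\<^sup>2 \<le> (\<Sum>\<^sub>\<infinity>c\<in>A. (x c)\<^sup>2) * (\<Sum>\<^sub>\<infinity>c\<in>A. (y c)\<^sup>2)"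
proof -
  let ?X = "\<Sum>\<^sub>\<infinity>c\<in>A. (x c)\<^sup>2" and ?Y = "\<Sum>\<^sub>\<infinity>c\<in>A. (y c)\<^sup>2"
  have finite_sums: "(\<Sum>c\<in>F. \<bar>x c * y c\<bar>) \<le> sqrt (?X * ?Y)" if F: "finite F" "F \<subseteq> A" for F
  proof -
    have "(\<Sum>c\<in>F. \<bar>x c\<bar> * \<bar>y c\<bar>)\<^sup>2 \<le> (\<Sum>c\<in>F. \<bar>x c\<bar>\<^sup>2) * (\<Sum>c\<in>F. \<bar>y c\<bar>\<^sup>2)"
      by (rule Cauchy_Schwarz_ineq_sum)
    also have "\<dots> \<le> ?X * ?Y"
    proof (intro mult_mono sum_nonneg infsum_nonneg)
      show "(\<Sum>c\<in>F. \<bar>x c\<bar>\<^sup>2) \<le> ?X"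
        using infsum_mono2[OF summable_on_finite[OF F(1)] x F(2)] F by simp
      show "(\<Sum>c\<in>F. \<bar>y c\<bar>\<^sup>2) \<le> ?Y"
        using infsum_mono2[OF summable_on_finite[OF F(1)] y F(2)] F by simp
    qed auto
    finally have "(\<Sum>c\<in>F. \<bar>x c\<bar> * \<bar>y c\<bar>) \<le> sqrt (?X * ?Y)"
      by (rule real_le_rsqrt)
    then show ?thesis
      by (simp only: abs_mult)
  qed
  have abs_summable: "(\<lambda>c. \<bar>x c * y c\<bar>) summable_on A"
  proof (rule nonneg_bdd_above_summable_on)
    show "bdd_above (sum (\<lambda>c. \<bar>x c * y c\<bar>) ` {F. F \<subseteq> A \<and> finite F})"
      by (rule bdd_aboveI[where M = "sqrt (?X * ?Y)"]) (auto simp: finite_sums)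
  qed simp
  show "(\<lambda>c. x c * y c) summable_on A"
    by (rule abs_summable_summable) (use abs_summable in simp)
  have "\<bar>\<Sum>\<^sub>\<infinity>c\<in>A. x c * y c\<bar> \<le> (\<Sum>\<^sub>\<infinity>c\<in>A. \<bar>x c * y c\<bar>)"
    using norm_infsum_bound[of "\<lambda>c. x c * y c" A] abs_summable by simp
  also have "\<dots> \<le> sqrt (?X * ?Y)"
    by (rule infsum_le_finite_sums[OF abs_summable finite_sums])
  finally have "\<bar>\<Sum>\<^sub>\<infinity>c\<in>A. x c * y c\<bar>\<^sup>2 \<le> (sqrt (?X * ?Y))\<^sup>2"
    by (intro power_mono) auto
  then show "(\<Sum>\<^sub>\<infinity>c\<in>A. x c * y c)\<^sup>2 \<le> ?X * ?Y"
    by (simp add: infsum_nonneg)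
qed

lemma has_sum_product:
  fixes f :: "'a \<Rightarrow> real" and g :: "'b \<Rightarrow> real"
  assumes f: "(f has_sum a) UNIV" and g: "(g has_sum b) UNIV"
  shows "((\<lambda>(c, d). f c * g d) has_sum (a * b)) UNIV"
proof -
  let ?fg = "\<lambda>(c, d). f c * g d"
  have abs_f: "(\<lambda>c. \<bar>f c\<bar>) summable_on UNIV" and abs_g: "(\<lambda>d. \<bar>g d\<bar>) summable_on UNIV"
    using summable_on_iff_abs_summable_on_real[THEN iffD1, OF has_sum_imp_summable[OF f]]
      summable_on_iff_abs_summable_on_real[THEN iffD1, OF has_sum_imp_summable[OF g]] by simp_all
  have "Infinite_Sum.abs_summable_on ?fg (Sigma UNIV (\<lambda>_. UNIV))"
    unfolding Infinite_Sum.abs_summable_on_Sigma_iff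
  proof (intro conjI ballI)
    show "Infinite_Sum.abs_summable_on (\<lambda>d. ?fg (c, d)) UNIV" for c
      using summable_on_cmult_right[OF abs_g, of "\<bar>f c\<bar>"] by (simp add: abs_mult)
    have "(\<lambda>c. \<bar>f c\<bar> * (\<Sum>\<^sub>\<infinity>d. \<bar>g d\<bar>)) summable_on UNIV"
      using summable_on_cmult_left[OF abs_f] by simp
    then show "Infinite_Sum.abs_summable_on (\<lambda>c. \<Sum>\<^sub>\<infinity>d. norm (?fg (c, d))) UNIV"
      by (simp add: abs_mult infsum_cmult_right' infsum_nonneg)
  qed
  then have summable: "?fg summable_on UNIV"
    using abs_summable_summable by fastforce
  have "infsum ?fg UNIV = (\<Sum>\<^sub>\<infinity>c. \<Sum>\<^sub>\<infinity>d. f c * g d)"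
    using infsum_Sigma_banach[of ?fg UNIV "\<lambda>_. UNIV"] summable by simp
  also have "\<dots> = a * b"
    using f g by (simp add: infsum_cmult_right' infsum_cmult_left' infsumI)
  finally show ?thesis
    using summable has_sum_iff by blast
qed

lemma has_sum_row_sums:
  fixes f :: "'a \<times> 'b \<Rightarrow> real"
  assumes f: "(f has_sum S) UNIV"
  shows "(\<lambda>c. f (i, c)) summable_on UNIV" and "((\<lambda>i. \<Sum>\<^sub>\<infinity>c. f (i, c)) has_sum S) UNIV"
proof -
  have Sigma: "(f has_sum S) (Sigma UNIV (\<lambda>_. UNIV))"
    using f by simp
  show rows: "(\<lambda>c. f (i, c)) summable_on UNIV" for i
    using summable_on_SigmaD1[of "\<lambda>x y. f (x, y)" UNIV "\<lambda>_. UNIV" i] Sigma has_sum_imp_summable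
    by fastforce
  show "((\<lambda>i. \<Sum>\<^sub>\<infinity>c. f (i, c)) has_sum S) UNIV"
    by (rule has_sum_Sigma'[OF Sigma], rule has_sum_infsum, rule rows)
qed

lemma has_sum_Un_ranges:
  fixes f :: "'a \<Rightarrow> 'b::topological_comm_monoid_add"
  assumes "inj g" "inj h" and partition: "\<And>y. y \<in> range g \<longleftrightarrow> y \<notin> range h"
    and "((f \<circ> g) has_sum a) UNIV" "((f \<circ> h) has_sum b) UNIV"
  shows "(f has_sum (a + b)) UNIV"
proof -
  have "(f has_sum a) (range g)" "(f has_sum b) (range h)"
    using assms has_sum_reindex[of g UNIV f a] has_sum_reindex[of h UNIV f b] by auto
  then have "(f has_sum (a + b)) (range g \<union> range h)"
    using partition by (intro has_sum_Un_disjoint) auto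
  also have "range g \<union> range h = UNIV"
    using partition by blast
  finally show ?thesis .
qed

lemma has_sum_even_odd:
  fixes f :: "nat \<Rightarrow> 'a::topological_comm_monoid_add"
  assumes "((\<lambda>m. f (2 * m)) has_sum a) UNIV" "((\<lambda>m. f (2 * m + 1)) has_sum b) UNIV"
  shows "(f has_sum (a + b)) UNIV"
proof (rule has_sum_Un_ranges[where g = "\<lambda>m. 2 * m" and h = "\<lambda>m. 2 * m + 1"])
  fix y :: nat
  have "y \<in> range (\<lambda>m. 2 * m) \<longleftrightarrow> even y"
    by (auto elim!: evenE)
  moreover have "y \<in> range (\<lambda>m. 2 * m + 1) \<longleftrightarrow> odd y"
    by (auto elim!: oddE)
  ultimately show "y \<in> range (\<lambda>m. 2 * m) \<longleftrightarrow> y \<notin> range (\<lambda>m. 2 * m + 1)"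
    by simp
qed (use assms in \<open>auto simp: inj_def o_def\<close>)

lemma has_sum_even_odd_last:
  fixes f :: "'c \<times> 'd \<times> nat \<Rightarrow> 'a::topological_comm_monoid_add"
  assumes "((\<lambda>(i, k, m). f (i, k, 2 * m)) has_sum a) UNIV"
    and "((\<lambda>(i, k, m). f (i, k, 2 * m + 1)) has_sum b) UNIV"
  shows "(f has_sum (a + b)) UNIV"
proof (rule has_sum_Un_ranges[where g = "\<lambda>(i, k, m). (i, k, 2 * m)" and h = "\<lambda>(i, k, m). (i, k, 2 * m + 1)"])
  fix y :: "'c \<times> 'd \<times> nat"
  have "y \<in> range (\<lambda>(i, k, m). (i, k, 2 * m)) \<longleftrightarrow> even (snd (snd y))"
    by (cases y) (auto simp: image_iff elim!: evenE)
  moreover have "y \<in> range (\<lambda>(i, k, m). (i, k, 2 * m + 1)) \<longleftrightarrow> odd (snd (snd y))"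
    by (cases y) (auto simp: image_iff elim!: oddE)
  ultimately show "y \<in> range (\<lambda>(i, k, m). (i, k, 2 * m)) \<longleftrightarrow> y \<notin> range (\<lambda>(i, k, m). (i, k, 2 * m + 1))"
    by simp
qed (use assms in \<open>auto simp: inj_def o_def split_def\<close>)

section \<open>Factorisations with Hilbert--Schmidt bounds\<close>

definition sum_sq_le :: "('a \<Rightarrow> real) \<Rightarrow> real \<Rightarrow> bool" where
  "sum_sq_le f M \<longleftrightarrow> (\<lambda>x. (f x)\<^sup>2) summable_on UNIV \<and> (\<Sum>\<^sub>\<infinity>x. (f x)\<^sup>2) \<le> M"

lemma sum_sq_leI:
  assumes "((\<lambda>x. (f x)\<^sup>2) has_sum S) UNIV" "S \<le> M"
  shows "sum_sq_le f M"
  using assms by (auto simp: sum_sq_le_def has_sum_iff)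

lemma sum_sq_le_nonneg: "sum_sq_le f M \<Longrightarrow> 0 \<le> M"
  unfolding sum_sq_le_def by (meson infsum_nonneg order.trans zero_le_power2)

lemma sum_sq_le_mono: "sum_sq_le f M \<Longrightarrow> M \<le> M' \<Longrightarrow> sum_sq_le f M'"
  unfolding sum_sq_le_def by auto

lemma sum_sq_le_scale: "sum_sq_le f M \<Longrightarrow> sum_sq_le (\<lambda>x. c * f x) (c\<^sup>2 * M)"
  unfolding sum_sq_le_def
  by (auto simp: power_mult_distrib infsum_cmult_right' summable_on_cmult_right intro: mult_left_mono)

lemma sum_sq_le_uminus: "sum_sq_le f M \<Longrightarrow> sum_sq_le (\<lambda>x. - f x) M"
  unfolding sum_sq_le_def by simp

lemma sum_sq_le_comp_inj: "sum_sq_le f M \<Longrightarrow> inj h \<Longrightarrow> sum_sq_le (f \<circ> h) M"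
  unfolding sum_sq_le_def using nonneg_summable_on_comp_inj[of "\<lambda>x. (f x)\<^sup>2" h]
  by (auto simp: o_def)

lemma sum_sq_le_infsum_mult:
  "sum_sq_le f M \<Longrightarrow> sum_sq_le g M' \<Longrightarrow> (\<Sum>\<^sub>\<infinity>x. (f x)\<^sup>2) * (\<Sum>\<^sub>\<infinity>y. (g y)\<^sup>2) \<le> M * M'"
  using sum_sq_le_nonneg unfolding sum_sq_le_def by (intro mult_mono) (auto intro: infsum_nonneg)

lemma sum_sq_le_hs3:
  assumes "sum_sq_le (\<lambda>(i, k, m). T i k m) M"
  shows "is_hs3 T" "hs_norm3 T \<le> sqrt M"
  using assms unfolding sum_sq_le_def is_hs3_def hs_norm3_def by (simp_all add: split_def)

definition interleave :: "tensor3 \<Rightarrow> tensor3 \<Rightarrow> tensor3" where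
  "interleave U V = (\<lambda>i k m. if even m then U i k (m div 2) else V i k (m div 2))"

lemma sum_sq_le_interleave:
  assumes U: "sum_sq_le (\<lambda>(i, k, m). U i k m) M" and V: "sum_sq_le (\<lambda>(i, k, m). V i k m) M'"
  shows "sum_sq_le (\<lambda>(i, k, m). interleave U V i k m) (M + M')"
proof (rule sum_sq_leI)
  let ?SU = "\<Sum>\<^sub>\<infinity>(i, k, m). (U i k m)\<^sup>2" and ?SV = "\<Sum>\<^sub>\<infinity>(i, k, m). (V i k m)\<^sup>2"
  have "((\<lambda>(i, k, m). (U i k m)\<^sup>2) has_sum ?SU) UNIV" "((\<lambda>(i, k, m). (V i k m)\<^sup>2) has_sum ?SV) UNIV"
    using U V by (auto simp: sum_sq_le_def split_def)
  then show "((\<lambda>x. ((\<lambda>(i, k, m). interleave U V i k m) x)\<^sup>2) has_sum (?SU + ?SV)) UNIV"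
    by (intro has_sum_even_odd_last) (simp_all add: interleave_def case_prod_beta)
  show "?SU + ?SV \<le> M + M'"
    using U V by (auto simp: sum_sq_le_def split_def)
qed

lemma factorises_add:
  assumes "factorises A U D" "factorises A' U' D'"
  shows "factorises (\<lambda>x z. A x z + A' x z) (interleave U U') (interleave D D')"
  using assms unfolding factorises_def
  by (intro allI has_sum_even_odd) (simp_all add: interleave_def)

lemma factorises_scale:
  assumes "factorises A U D"
  shows "factorises (\<lambda>x z. c * A x z) (\<lambda>i k m. (sgn c * sqrt \<bar>c\<bar>) * U i k m) (\<lambda>i k m. sqrt \<bar>c\<bar> * D i k m)"
  unfolding factorises_def
proof (intro allI)
  fix i1 i2 k1 k2
  have "sgn c * sqrt \<bar>c\<bar> * sqrt \<bar>c\<bar> = c"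
    by (simp add: mult.assoc sgn_mult_abs)
  then have "(\<lambda>m. sgn c * sqrt \<bar>c\<bar> * U i1 k1 m * (sqrt \<bar>c\<bar> * D i2 k2 m)) = (\<lambda>m. c * (U i1 k1 m * D i2 k2 m))"
    by (auto simp: fun_eq_iff algebra_simps)
  then show "((\<lambda>m. sgn c * sqrt \<bar>c\<bar> * U i1 k1 m * (sqrt \<bar>c\<bar> * D i2 k2 m)) has_sum c * A (i1, i2) (k1, k2)) UNIV"
    using has_sum_cmult_right[of "\<lambda>m. U i1 k1 m * D i2 k2 m" UNIV "A (i1, i2) (k1, k2)" c] assms
    unfolding factorises_def by simp
qed

definition factorisable_le :: "opmat \<Rightarrow> real \<Rightarrow> bool" where
  "factorisable_le A M \<longleftrightarrow> (\<exists>U D. sum_sq_le (\<lambda>(i, k, m). U i k m) M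
                                 \<and> sum_sq_le (\<lambda>(i, k, m). D i k m) M \<and> factorises A U D)"

lemma factorisable_le_add:
  assumes "factorisable_le A M" "factorisable_le A' M'"
  shows "factorisable_le (\<lambda>x z. A x z + A' x z) (M + M')"
  using assms factorises_add sum_sq_le_interleave unfolding factorisable_le_def by meson

lemma factorisable_le_scale:
  assumes "factorisable_le A M"
  shows "factorisable_le (\<lambda>x z. c * A x z) (\<bar>c\<bar> * M)"
proof -
  obtain U D where U: "sum_sq_le (\<lambda>(i, k, m). U i k m) M" and D: "sum_sq_le (\<lambda>(i, k, m). D i k m) M"
    and A: "factorises A U D"
    using assms unfolding factorisable_le_def by blast
  have "(sgn c * sqrt \<bar>c\<bar>)\<^sup>2 = \<bar>c\<bar>" "(sqrt \<bar>c\<bar>)\<^sup>2 = \<bar>c\<bar>"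
    by (simp_all add: power_mult_distrib sgn_if)
  then have "sum_sq_le (\<lambda>(i, k, m). (sgn c * sqrt \<bar>c\<bar>) * U i k m) (\<bar>c\<bar> * M)"
    and "sum_sq_le (\<lambda>(i, k, m). sqrt \<bar>c\<bar> * D i k m) (\<bar>c\<bar> * M)"
    using sum_sq_le_scale[OF U, of "sgn c * sqrt \<bar>c\<bar>"] sum_sq_le_scale[OF D, of "sqrt \<bar>c\<bar>"]
    by (simp_all add: split_def)
  then show ?thesis
    using factorises_scale[OF A] unfolding factorisable_le_def by (intro exI conjI)
qed

lemma factorisable_le_mono: "factorisable_le A M \<Longrightarrow> M \<le> M' \<Longrightarrow> factorisable_le A M'"
  unfolding factorisable_le_def by (meson sum_sq_le_mono)

lemma factorisable_le_hs_norm: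
  assumes "factorisable_le A (c\<^sup>2)" "0 \<le> c"
  shows "\<exists>U D. is_hs3 U \<and> is_hs3 D \<and> hs_norm3 U \<le> c \<and> hs_norm3 D \<le> c \<and> factorises A U D"
  using assms sum_sq_le_hs3[where M = "c\<^sup>2"] unfolding factorisable_le_def by auto

definition outer :: "(nat \<times> nat \<Rightarrow> real) \<Rightarrow> (nat \<times> nat \<Rightarrow> real) \<Rightarrow> opmat" where
  "outer x y = (\<lambda>w z. x w * y z)"

definition vec_factorises :: "(nat \<times> nat \<Rightarrow> real) \<Rightarrow> (nat \<times> nat \<Rightarrow> real) \<Rightarrow> (nat \<times> nat \<Rightarrow> real) \<Rightarrow> bool" where
  "vec_factorises w p q \<longleftrightarrow> (\<forall>i j. ((\<lambda>c. p (i, c) * q (j, c)) has_sum w (i, j)) UNIV)"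

definition pair_tensor :: "(nat \<times> nat \<Rightarrow> real) \<Rightarrow> (nat \<times> nat \<Rightarrow> real) \<Rightarrow> tensor3" where
  "pair_tensor p u = (\<lambda>i k m. p (i, fst (prod_decode m)) * u (k, snd (prod_decode m)))"

lemma factorises_outer:
  assumes x: "vec_factorises x p q" and y: "vec_factorises y u v"
  shows "factorises (outer x y) (pair_tensor p u) (pair_tensor q v)"
  unfolding factorises_def
proof (intro allI)
  fix i1 i2 k1 k2
  let ?g = "\<lambda>(c, d). (p (i1, c) * q (i2, c)) * (u (k1, d) * v (k2, d))"
  have "(?g has_sum x (i1, i2) * y (k1, k2)) UNIV"
    using x y unfolding vec_factorises_def by (intro has_sum_product) auto
  then have "((?g \<circ> prod_decode) has_sum x (i1, i2) * y (k1, k2)) UNIV"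
    using has_sum_reindex[OF inj_prod_decode[of UNIV], of ?g] by (simp add: surj_prod_decode)
  moreover have "?g \<circ> prod_decode = (\<lambda>m. pair_tensor p u i1 k1 m * pair_tensor q v i2 k2 m)"
    by (auto simp: fun_eq_iff pair_tensor_def split: prod.splits)
  ultimately show "((\<lambda>m. pair_tensor p u i1 k1 m * pair_tensor q v i2 k2 m) has_sum outer x y (i1, i2) (k1, k2)) UNIV"
    by (simp add: outer_def)
qed

lemma sum_sq_le_pair_tensor:
  assumes p: "sum_sq_le p M" and u: "sum_sq_le u M'"
  shows "sum_sq_le (\<lambda>(i, k, m). pair_tensor p u i k m) (M * M')"
proof (rule sum_sq_leI)
  let ?Sp = "\<Sum>\<^sub>\<infinity>x. (p x)\<^sup>2" and ?Su = "\<Sum>\<^sub>\<infinity>y. (u y)\<^sup>2"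
  let ?split = "\<lambda>(i, k, m). ((i, fst (prod_decode m)), (k, snd (prod_decode m)))"
  have "((\<lambda>(x, y). (p x)\<^sup>2 * (u y)\<^sup>2) has_sum ?Sp * ?Su) UNIV"
    using p u unfolding sum_sq_le_def by (intro has_sum_product) auto
  moreover have "bij_betw ?split UNIV UNIV"
    by (rule bij_betw_byWitness[where f' = "\<lambda>((i, c), (k, d)). (i, k, prod_encode (c, d))"]) auto
  ultimately have "((\<lambda>t. (\<lambda>(x, y). (p x)\<^sup>2 * (u y)\<^sup>2) (?split t)) has_sum ?Sp * ?Su) UNIV"
    using has_sum_reindex_bij_betw by blast
  then show "((\<lambda>t. ((\<lambda>(i, k, m). pair_tensor p u i k m) t)\<^sup>2) has_sum ?Sp * ?Su) UNIV"
    by (simp add: pair_tensor_def power_mult_distrib case_prod_beta)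
  show "?Sp * ?Su \<le> M * M'"
    by (rule sum_sq_le_infsum_mult[OF p u])
qed

lemma factorisable_le_outer:
  assumes "vec_factorises x p q" "vec_factorises y u v"
    and "sum_sq_le p M" "sum_sq_le q M" "sum_sq_le u M'" "sum_sq_le v M'"
  shows "factorisable_le (outer x y) (M * M')"
  unfolding factorisable_le_def
  using factorises_outer[OF assms(1,2)] sum_sq_le_pair_tensor[OF assms(3,5)] sum_sq_le_pair_tensor[OF assms(4,6)]
  by (intro exI conjI)

lemma sum_sq_le_rows: "sum_sq_le p M \<Longrightarrow> (\<lambda>c. (p (i, c))\<^sup>2) summable_on UNIV"
  unfolding sum_sq_le_def using has_sum_row_sums(1)[OF has_sum_infsum, of "\<lambda>x. (p x)\<^sup>2"] by blast

lemma sum_sq_le_vec_factorises: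
  assumes w: "vec_factorises w p q" and p: "sum_sq_le p M" and q: "sum_sq_le q M'"
  shows "sum_sq_le w (M * M')"
proof -
  let ?P = "\<lambda>i. \<Sum>\<^sub>\<infinity>c. (p (i, c))\<^sup>2" and ?Q = "\<lambda>j. \<Sum>\<^sub>\<infinity>c. (q (j, c))\<^sup>2"
  have p_rows: "(\<lambda>c. (p (i, c))\<^sup>2) summable_on UNIV" "(?P has_sum (\<Sum>\<^sub>\<infinity>x. (p x)\<^sup>2)) UNIV" for i
    using sum_sq_le_rows[OF p] has_sum_row_sums(2)[OF has_sum_infsum, of "\<lambda>x. (p x)\<^sup>2"] p
    unfolding sum_sq_le_def by auto
  have q_rows: "(\<lambda>c. (q (j, c))\<^sup>2) summable_on UNIV" "(?Q has_sum (\<Sum>\<^sub>\<infinity>x. (q x)\<^sup>2)) UNIV" for j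
    using sum_sq_le_rows[OF q] has_sum_row_sums(2)[OF has_sum_infsum, of "\<lambda>x. (q x)\<^sup>2"] q
    unfolding sum_sq_le_def by auto
  have pointwise: "(w (i, j))\<^sup>2 \<le> ?P i * ?Q j" for i j
  proof -
    have "w (i, j) = (\<Sum>\<^sub>\<infinity>c. p (i, c) * q (j, c))"
      using infsumI[OF w[unfolded vec_factorises_def, rule_format]] by simp
    then show ?thesis
      using infsum_Cauchy_Schwarz(2)[OF p_rows(1) q_rows(1)] by simp
  qed
  have PQ: "((\<lambda>(i, j). ?P i * ?Q j) has_sum (\<Sum>\<^sub>\<infinity>x. (p x)\<^sup>2) * (\<Sum>\<^sub>\<infinity>x. (q x)\<^sup>2)) UNIV"
    by (rule has_sum_product[OF p_rows(2) q_rows(2)])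
  have summable: "(\<lambda>x. (w x)\<^sup>2) summable_on UNIV"
  proof (rule summable_on_comparison_test[OF has_sum_imp_summable[OF PQ]])
    show "(w x)\<^sup>2 \<le> (\<lambda>(i, j). ?P i * ?Q j) x" for x
      using pointwise[of "fst x" "snd x"] by (cases x) simp
  qed simp
  have "(\<Sum>\<^sub>\<infinity>x. (w x)\<^sup>2) \<le> (\<Sum>\<^sub>\<infinity>x. (p x)\<^sup>2) * (\<Sum>\<^sub>\<infinity>x. (q x)\<^sup>2)"
    unfolding infsumI[OF PQ, symmetric]
    using pointwise by (intro infsum_mono[OF summable has_sum_imp_summable[OF PQ]]) (auto simp: split_def)
  also have "\<dots> \<le> M * M'"
    by (rule sum_sq_le_infsum_mult[OF p q])
  finally show ?thesis
    using summable unfolding sum_sq_le_def by blast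
qed

lemma sum_sq_le_inner:
  assumes a: "sum_sq_le a M" and b: "sum_sq_le b M'"
  shows "(\<lambda>y. a y * b y) summable_on UNIV" and "\<bar>\<Sum>\<^sub>\<infinity>y. a y * b y\<bar> \<le> sqrt (M * M')"
proof -
  have sq: "(\<lambda>y. (a y)\<^sup>2) summable_on UNIV" "(\<lambda>y. (b y)\<^sup>2) summable_on UNIV"
    using a b unfolding sum_sq_le_def by auto
  then show "(\<lambda>y. a y * b y) summable_on UNIV"
    by (rule infsum_Cauchy_Schwarz(1))
  have "\<bar>\<Sum>\<^sub>\<infinity>y. a y * b y\<bar>\<^sup>2 \<le> (\<Sum>\<^sub>\<infinity>y. (a y)\<^sup>2) * (\<Sum>\<^sub>\<infinity>y. (b y)\<^sup>2)"
    using infsum_Cauchy_Schwarz(2)[OF sq] by simp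
  also have "\<dots> \<le> M * M'"
    by (rule sum_sq_le_infsum_mult[OF a b])
  finally show "\<bar>\<Sum>\<^sub>\<infinity>y. a y * b y\<bar> \<le> sqrt (M * M')"
    by (rule real_le_rsqrt)
qed

lemma has_sum_single: "((\<lambda>y. if y = y0 then c else 0) has_sum c) UNIV"
  by (rule has_sum_finite_neutralI[of "{y0}"]) auto

definition e00 :: "nat \<times> nat \<Rightarrow> real" where
  "e00 x = (if x = (0, 0) then 1 else 0)"

lemma vec_factorises_e00: "vec_factorises e00 e00 e00"
  unfolding vec_factorises_def
proof (intro allI)
  fix i j
  show "((\<lambda>c. e00 (i, c) * e00 (j, c)) has_sum e00 (i, j)) UNIV"
    by (rule has_sum_finite_neutralI[of "{0}"]) (auto simp: e00_def)
qed

lemma has_sum_e00: "((\<lambda>y. c * e00 y) has_sum c) UNIV"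
  using has_sum_single[of "(0, 0)" c] by (simp add: e00_def if_distrib cong: if_cong)

lemma sum_sq_le_e00: "sum_sq_le e00 1"
  by (rule sum_sq_leI[OF has_sum_finite_neutralI[of "{(0, 0)}"]]) (auto simp: e00_def)

section \<open>The exponential of a corner operator\<close>

text \<open>For \<open>s = t\<^sup>2\<close>, \<open>exp_odd_part s = sin t / t\<close> and \<open>exp_even_part s = (1 - cos t) / t\<^sup>2\<close>.\<close>

definition exp_odd_coeff :: "real \<Rightarrow> nat \<Rightarrow> real" where
  "exp_odd_coeff s n = (if odd n then (- s) ^ (n div 2) else 0)"

definition exp_even_coeff :: "real \<Rightarrow> nat \<Rightarrow> real" where
  "exp_even_coeff s n = (if even n \<and> n > 0 then (- s) ^ (n div 2 - 1) else 0)"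

definition exp_odd_part :: "real \<Rightarrow> real" where
  "exp_odd_part s = (\<Sum>n. exp_odd_coeff s n / fact n)"

definition exp_even_part :: "real \<Rightarrow> real" where
  "exp_even_part s = (\<Sum>n. exp_even_coeff s n / fact n)"

lemma abs_exp_coeff_le:
  shows "\<bar>exp_odd_coeff s n\<bar> \<le> (max 1 \<bar>s\<bar>) ^ n" and "\<bar>exp_even_coeff s n\<bar> \<le> (max 1 \<bar>s\<bar>) ^ n"
proof -
  have "\<bar>s\<bar> ^ k \<le> (max 1 \<bar>s\<bar>) ^ n" if "k \<le> n" for k
    using power_mono[of "\<bar>s\<bar>" "max 1 \<bar>s\<bar>" k] power_increasing[OF that, of "max 1 \<bar>s\<bar>"] by simp
  then show "\<bar>exp_odd_coeff s n\<bar> \<le> (max 1 \<bar>s\<bar>) ^ n" "\<bar>exp_even_coeff s n\<bar> \<le> (max 1 \<bar>s\<bar>) ^ n"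
    by (auto simp: exp_odd_coeff_def exp_even_coeff_def power_abs)
qed

lemma summable_exp_coeff:
  shows "summable (\<lambda>n. exp_odd_coeff s n / fact n)" and "summable (\<lambda>n. exp_even_coeff s n / fact n)"
  by (rule summable_comparison_test'[OF summable_exp[of "max 1 \<bar>s\<bar>"]],
      simp add: abs_exp_coeff_le divide_right_mono field_simps)+

lemma abs_suminf_le:
  fixes f g :: "nat \<Rightarrow> real"
  assumes "\<And>n. \<bar>f n\<bar> \<le> g n" "summable g"
  shows "\<bar>suminf f\<bar> \<le> suminf g"
proof -
  have abs_f: "summable (\<lambda>n. \<bar>f n\<bar>)"
    by (rule summable_comparison_test'[OF assms(2)]) (use assms(1) in auto)
  have "\<bar>suminf f\<bar> \<le> (\<Sum>n. \<bar>f n\<bar>)"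
    by (rule summable_rabs[OF abs_f])
  also have "\<dots> \<le> suminf g"
    by (rule suminf_le[OF assms(1) abs_f assms(2)])
  finally show ?thesis .
qed

lemma sums_inverse_fact: "(\<lambda>n. inverse (fact n)) sums exp (1 :: real)"
  using exp_converges[of "1 :: real"] by (simp add: divide_inverse)

lemma exp_even_part_bound:
  assumes "\<bar>s\<bar> \<le> 1"
  shows "\<bar>exp_even_part s\<bar> \<le> exp 1"
  unfolding exp_even_part_def sums_unique[OF sums_inverse_fact]
proof (rule abs_suminf_le[OF _ sums_summable[OF sums_inverse_fact]])
  show "\<bar>exp_even_coeff s n / fact n\<bar> \<le> inverse (fact n)" for n
    using abs_exp_coeff_le(2)[of s n] assms by (simp add: divide_inverse abs_mult max_absorb1)
qed

lemma exp_odd_part_bound: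
  assumes "\<bar>s\<bar> \<le> 1"
  shows "\<bar>exp_odd_part s - 1\<bar> \<le> \<bar>s\<bar> * exp 1"
proof -
  let ?f = "\<lambda>n. exp_odd_coeff s n / fact n - (if n = 1 then 1 else 0)"
  have "?f sums (exp_odd_part s - 1)"
    unfolding exp_odd_part_def
    by (intro sums_diff summable_sums summable_exp_coeff) (rule sums_single)
  then have "exp_odd_part s - 1 = suminf ?f"
    by (simp add: sums_unique)
  also have "\<bar>suminf ?f\<bar> \<le> (\<Sum>n. \<bar>s\<bar> * inverse (fact n))"
  proof (rule abs_suminf_le)
    show "summable (\<lambda>n. \<bar>s\<bar> * inverse (fact n))"
      by (intro summable_mult sums_summable[OF sums_inverse_fact])
    show "\<bar>?f n\<bar> \<le> \<bar>s\<bar> * inverse (fact n)" for n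
    proof (cases "odd n \<and> n \<noteq> 1")
      case True
      then have "n div 2 \<ge> 1"
        by (auto elim!: oddE)
      then have "\<bar>s\<bar> ^ (n div 2) \<le> \<bar>s\<bar>"
        using power_decreasing[of 1 "n div 2" "\<bar>s\<bar>"] assms by simp
      then show ?thesis
        using True by (auto simp: exp_odd_coeff_def divide_inverse abs_mult power_abs intro: mult_right_mono)
    qed (auto simp: exp_odd_coeff_def)
  qed
  also have "\<dots> = \<bar>s\<bar> * exp 1"
    using sums_unique[OF sums_mult[OF sums_inverse_fact, of "\<bar>s\<bar>"]] by simp
  finally show ?thesis .
qed

definition corner_op :: "(nat \<times> nat \<Rightarrow> real) \<Rightarrow> (nat \<times> nat \<Rightarrow> real) \<Rightarrow> opmat" where
  "corner_op a b = (\<lambda>x z. outer a e00 x z - outer e00 b x z)"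

definition exp_remainder :: "opmat \<Rightarrow> opmat" where
  "exp_remainder A = (\<lambda>x z. mat_exp A x z - A x z - id_mat x z)"

locale rank_two_op =
  fixes a b :: "nat \<times> nat \<Rightarrow> real"
  assumes a00: "a (0, 0) = 0" and b00: "b (0, 0) = 0"
    and summable_ab: "(\<lambda>y. a y * b y) summable_on UNIV"
begin

abbreviation B :: opmat where
  "B \<equiv> corner_op a b"

definition s :: real where
  "s = (\<Sum>\<^sub>\<infinity>y. a y * b y)"

definition B2 :: opmat where
  "B2 = (\<lambda>x z. - outer a b x z - s * outer e00 e00 x z)"

lemma has_sum_ab: "((\<lambda>y. a y * b y) has_sum s) UNIV"
  unfolding s_def using summable_ab by (rule has_sum_infsum)

lemma has_sum_B_id: "((\<lambda>y. B x y * id_mat y z) has_sum B x z) UNIV"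
  using has_sum_single[of z "B x z"] by (simp add: id_mat_def if_distrib cong: if_cong)

lemma has_sum_B_B: "((\<lambda>y. B x y * B y z) has_sum B2 x z) UNIV"
proof -
  have "(\<lambda>y. B x y * B y z) = (\<lambda>y. - (a x * b z) * e00 y + - (e00 x * e00 z) * (a y * b y))"
    by (auto simp: fun_eq_iff corner_op_def outer_def e00_def a00 b00)
  moreover have "((\<lambda>y. - (a x * b z) * e00 y + - (e00 x * e00 z) * (a y * b y))
      has_sum (- (a x * b z) + - (e00 x * e00 z) * s)) UNIV"
    by (intro has_sum_add has_sum_e00 has_sum_cmult_right has_sum_ab)
  ultimately show ?thesis
    by (simp add: B2_def outer_def mult.commute)
qed

lemma has_sum_B_B2: "((\<lambda>y. B x y * B2 y z) has_sum - s * B x z) UNIV"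
proof -
  have "(\<lambda>y. B x y * B2 y z) = (\<lambda>y. - s * a x * e00 z * e00 y + (e00 x * b z) * (a y * b y))"
    by (auto simp: fun_eq_iff corner_op_def B2_def outer_def e00_def a00 b00)
  moreover have "((\<lambda>y. - s * a x * e00 z * e00 y + (e00 x * b z) * (a y * b y))
      has_sum (- s * a x * e00 z + (e00 x * b z) * s)) UNIV"
    by (intro has_sum_add has_sum_e00 has_sum_cmult_right has_sum_ab)
  ultimately show ?thesis
    by (simp add: corner_op_def outer_def algebra_simps)
qed

definition span_op :: "real \<Rightarrow> real \<Rightarrow> real \<Rightarrow> opmat" where
  "span_op \<alpha> \<beta> \<gamma> = (\<lambda>x z. \<alpha> * id_mat x z + \<beta> * B x z + \<gamma> * B2 x z)"

lemma mat_mult_span_op: "mat_mult B (span_op \<alpha> \<beta> \<gamma>) = span_op 0 (\<alpha> - s * \<gamma>) \<beta>"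
proof (intro ext)
  fix x z
  have "((\<lambda>y. \<alpha> * (B x y * id_mat y z) + \<beta> * (B x y * B y z) + \<gamma> * (B x y * B2 y z))
      has_sum (\<alpha> * B x z + \<beta> * B2 x z + \<gamma> * (- s * B x z))) UNIV"
    by (intro has_sum_add has_sum_cmult_right has_sum_B_id has_sum_B_B has_sum_B_B2)
  then show "mat_mult B (span_op \<alpha> \<beta> \<gamma>) x z = span_op 0 (\<alpha> - s * \<gamma>) \<beta> x z"
    unfolding mat_mult_def span_op_def by (auto simp: algebra_simps dest!: infsumI)
qed

lemma mat_pow_B: "mat_pow B n = span_op (if n = 0 then 1 else 0) (exp_odd_coeff s n) (exp_even_coeff s n)"
proof (induction n)
  case 0
  show ?case
    by (auto simp: span_op_def exp_odd_coeff_def exp_even_coeff_def fun_eq_iff)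
next
  case (Suc n)
  have "(if n = 0 then 1 else 0) - s * exp_even_coeff s n = exp_odd_coeff s (Suc n)"
  proof (cases "even n")
    case True
    then obtain k where "n = 2 * k"
      by blast
    then show ?thesis
      by (cases k) (auto simp: exp_odd_coeff_def exp_even_coeff_def)
  qed (auto simp: exp_odd_coeff_def exp_even_coeff_def odd_pos)
  moreover have "exp_odd_coeff s n = exp_even_coeff s (Suc n)"
    by (cases "even n") (auto simp: exp_odd_coeff_def exp_even_coeff_def elim!: oddE)
  ultimately show ?case
    by (simp add: Suc mat_mult_span_op)
qed

lemma mat_exp_B: "mat_exp B x z = id_mat x z + exp_odd_part s * B x z + exp_even_part s * B2 x z"
proof -
  have "(\<lambda>n. mat_pow B n x z / fact n)
      = (\<lambda>n. (if n = 0 then id_mat x z else 0) + exp_odd_coeff s n / fact n * B x z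
             + exp_even_coeff s n / fact n * B2 x z)"
    by (auto simp: fun_eq_iff mat_pow_B span_op_def add_divide_distrib)
  moreover have "\<dots> sums (id_mat x z + exp_odd_part s * B x z + exp_even_part s * B2 x z)"
    unfolding exp_odd_part_def exp_even_part_def
    by (intro sums_add sums_single sums_mult2 summable_sums summable_exp_coeff)
  ultimately show ?thesis
    unfolding mat_exp_def by (simp add: sums_unique[symmetric])
qed

lemma exp_remainder_B:
  "exp_remainder B = (\<lambda>x z. (exp_odd_part s - 1) * outer a e00 x z + (- (exp_odd_part s - 1)) * outer e00 b x z
      + ((- exp_even_part s) * outer a b x z + (- (exp_even_part s * s)) * outer e00 e00 x z))"
  unfolding exp_remainder_def mat_exp_B by (simp add: fun_eq_iff B2_def corner_op_def algebra_simps)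

end

lemma factorisable_le_corner_op:
  assumes "vec_factorises a p q" "vec_factorises b u v"
    and "sum_sq_le p M" "sum_sq_le q M" "sum_sq_le u M" "sum_sq_le v M"
  shows "factorisable_le (corner_op a b) (2 * M)"
proof -
  have "factorisable_le (outer a e00) (M * 1)" "factorisable_le (outer e00 b) (1 * M)"
    using factorisable_le_outer[OF assms(1) vec_factorises_e00 assms(3,4) sum_sq_le_e00 sum_sq_le_e00]
      factorisable_le_outer[OF vec_factorises_e00 assms(2) sum_sq_le_e00 sum_sq_le_e00 assms(5,6)] .
  then have "factorisable_le (\<lambda>x z. outer a e00 x z + (- 1) * outer e00 b x z) (M * 1 + \<bar>- 1\<bar> * (1 * M))"
    by (intro factorisable_le_add factorisable_le_scale)
  then show ?thesis
    by (simp add: corner_op_def)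
qed

lemma factorisable_le_exp_remainder_corner_op:
  assumes a: "vec_factorises a p q" and b: "vec_factorises b u v"
    and p: "sum_sq_le p M" and q: "sum_sq_le q M" and u: "sum_sq_le u M" and v: "sum_sq_le v M"
    and a00: "a (0, 0) = 0" and b00: "b (0, 0) = 0" and M1: "M \<le> 1"
  shows "factorisable_le (exp_remainder (corner_op a b)) (4 * exp 1 * M\<^sup>2)"
proof -
  have M0: "0 \<le> M"
    by (rule sum_sq_le_nonneg[OF p])
  have "sum_sq_le a (M * M)" "sum_sq_le b (M * M)"
    using sum_sq_le_vec_factorises a b p q u v by blast+
  then have ab: "(\<lambda>y. a y * b y) summable_on UNIV" "\<bar>\<Sum>\<^sub>\<infinity>y. a y * b y\<bar> \<le> sqrt ((M * M) * (M * M))"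
    by (rule sum_sq_le_inner)+
  interpret rank_two_op a b
    using a00 b00 ab(1) by unfold_locales
  have s: "\<bar>s\<bar> \<le> M\<^sup>2"
    using ab(2) M0 by (simp add: s_def power2_eq_square real_sqrt_mult)
  have "\<bar>s\<bar> \<le> 1"
    using s M0 M1 power_le_one[of M 2] by linarith
  then have odd_part: "\<bar>exp_odd_part s - 1\<bar> \<le> exp 1 * M\<^sup>2" and even_part: "\<bar>exp_even_part s\<bar> \<le> exp 1"
    using exp_odd_part_bound[of s] exp_even_part_bound[of s] s
    by (auto intro: order.trans[OF _ mult_left_mono[of "\<bar>s\<bar>" "M\<^sup>2" "exp 1"]] simp: mult.commute)
  have outer_terms: "factorisable_le (outer a e00) (M * 1)" "factorisable_le (outer e00 b) (1 * M)"
    "factorisable_le (outer a b) (M * M)" "factorisable_le (outer e00 e00) (1 * 1)"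
    using factorisable_le_outer[OF a vec_factorises_e00 p q sum_sq_le_e00 sum_sq_le_e00]
      factorisable_le_outer[OF vec_factorises_e00 b sum_sq_le_e00 sum_sq_le_e00 u v]
      factorisable_le_outer[OF a b p q u v]
      factorisable_le_outer[OF vec_factorises_e00 vec_factorises_e00 sum_sq_le_e00 sum_sq_le_e00 sum_sq_le_e00 sum_sq_le_e00] .
  let ?\<phi> = "exp_odd_part s - 1" and ?\<psi> = "exp_even_part s"
  have "factorisable_le (exp_remainder B)
      (\<bar>?\<phi>\<bar> * (M * 1) + \<bar>- ?\<phi>\<bar> * (1 * M) + (\<bar>- ?\<psi>\<bar> * (M * M) + \<bar>- (?\<psi> * s)\<bar> * (1 * 1)))"
    unfolding exp_remainder_B using outer_terms by (intro factorisable_le_add factorisable_le_scale)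
  moreover have "\<bar>?\<phi>\<bar> * M \<le> exp 1 * M\<^sup>2"
    using mult_mono[OF odd_part M1] M0 by (simp add: power2_eq_square)
  moreover have "\<bar>?\<psi>\<bar> * (M * M) \<le> exp 1 * M\<^sup>2"
    using mult_right_mono[OF even_part, of "M * M"] by (simp add: power2_eq_square)
  moreover have "\<bar>?\<psi> * s\<bar> \<le> exp 1 * M\<^sup>2"
    unfolding abs_mult using mult_mono[OF even_part s] by simp
  ultimately have "factorisable_le (exp_remainder B) (exp 1 * M\<^sup>2 + exp 1 * M\<^sup>2 + (exp 1 * M\<^sup>2 + exp 1 * M\<^sup>2))"
    by (elim factorisable_le_mono) (simp only: abs_minus_cancel mult_1_left mult_1_right)
  then show ?thesis
    by (elim factorisable_le_mono) simp
qed

section \<open>Corner tensors\<close>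

lemma corner_tensor_zero_entries:
  assumes "corner_tensor P"
  shows "P 0 0 0 c = 0" "P 0 0 i 0 = 0" "P 0 c 0 0 = 0" "P i 0 0 0 = 0"
  using assms unfolding corner_tensor_def by fastforce+

lemma sum_sq_le_hs_norm4:
  assumes "is_hs4 P"
  shows "sum_sq_le (\<lambda>(i, j, k, l). P i j k l) ((hs_norm4 P)\<^sup>2)"
  using assms unfolding sum_sq_le_def is_hs4_def hs_norm4_def
  by (simp add: split_def infsum_nonneg)

lemma infsum_nat_from_one:
  fixes f :: "nat \<Rightarrow> real"
  assumes "f 0 = 0"
  shows "(\<Sum>\<^sub>\<infinity>c\<in>{1..}. f c) = (\<Sum>\<^sub>\<infinity>c. f c)"
  using assms by (intro infsum_cong_neutral) (auto simp: not_less_eq_eq)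

lemma vec_factorises_lvec:
  assumes "corner_tensor P"
    and p: "sum_sq_le (\<lambda>(i, c). P 0 0 i c) M" and q: "sum_sq_le (\<lambda>(j, c). P 0 c j 0) M'"
  shows "vec_factorises (\<lambda>(i, j). lvec P i j) (\<lambda>(i, c). P 0 0 i c) (\<lambda>(j, c). P 0 c j 0)"
  unfolding vec_factorises_def
proof (intro allI)
  fix i j
  have rows: "(\<lambda>c. (P 0 0 i c)\<^sup>2) summable_on UNIV" "(\<lambda>c. (P 0 c j 0)\<^sup>2) summable_on UNIV"
    using sum_sq_le_rows[OF p, of i] sum_sq_le_rows[OF q, of j] by simp_all
  have "lvec P i j = (\<Sum>\<^sub>\<infinity>c. P 0 0 i c * P 0 c j 0)"
    using corner_tensor_zero_entries[OF assms(1)] infsum_nat_from_one[of "\<lambda>c. P 0 0 i c * P 0 c j 0"]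
    by (cases "i = 0 \<or> j = 0") (auto simp: lvec_def)
  then show "((\<lambda>c. (\<lambda>(i, c). P 0 0 i c) (i, c) * (\<lambda>(j, c). P 0 c j 0) (j, c)) has_sum (\<lambda>(i, j). lvec P i j) (i, j)) UNIV"
    using infsum_Cauchy_Schwarz(1)[OF rows] by (simp add: has_sum_infsum)
qed

lemma vec_factorises_rvec:
  assumes "corner_tensor P"
    and u: "sum_sq_le (\<lambda>(i, d). P i 0 0 d) M" and v: "sum_sq_le (\<lambda>(j, d). P j d 0 0) M'"
  shows "vec_factorises (\<lambda>(i, j). rvec P i j) (\<lambda>(i, d). P i 0 0 d) (\<lambda>(j, d). P j d 0 0)"
  unfolding vec_factorises_def
proof (intro allI)
  fix i j
  have rows: "(\<lambda>d. (P i 0 0 d)\<^sup>2) summable_on UNIV" "(\<lambda>d. (P j d 0 0)\<^sup>2) summable_on UNIV"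
    using sum_sq_le_rows[OF u, of i] sum_sq_le_rows[OF v, of j] by simp_all
  have "rvec P i j = (\<Sum>\<^sub>\<infinity>d. P i 0 0 d * P j d 0 0)"
    using corner_tensor_zero_entries[OF assms(1)] infsum_nat_from_one[of "\<lambda>d. P i 0 0 d * P j d 0 0"]
    by (cases "i = 0 \<or> j = 0") (auto simp: rvec_def)
  then show "((\<lambda>d. (\<lambda>(i, d). P i 0 0 d) (i, d) * (\<lambda>(j, d). P j d 0 0) (j, d)) has_sum (\<lambda>(i, j). rvec P i j) (i, j)) UNIV"
    using infsum_Cauchy_Schwarz(1)[OF rows] by (simp add: has_sum_infsum)
qed

lemma vec_factorises_uminus: "vec_factorises w p q \<Longrightarrow> vec_factorises (\<lambda>x. - w x) (\<lambda>x. - p x) q"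
  unfolding vec_factorises_def using has_sum_uminusI by fastforce

lemma Bmat_eq_corner_op: "Bmat P = corner_op (\<lambda>(i, j). lvec P i j) (\<lambda>(i, j). rvec P i j)"
  by (auto simp: fun_eq_iff Bmat_def corner_op_def outer_def e00_def)

lemma corner_tensor_factorisable:
  assumes P: "corner_tensor P" and norm: "hs_norm4 P \<le> \<eta>" and \<eta>1: "\<eta> \<le> 1"
  shows "factorisable_le (Bmat P) ((2 * \<eta>)\<^sup>2)"
    and "factorisable_le (exp_remainder (Bmat P)) ((2 * sqrt (exp 1) * \<eta>\<^sup>2)\<^sup>2)"
    and "factorisable_le (exp_remainder (\<lambda>x z. - Bmat P x z)) ((2 * sqrt (exp 1) * \<eta>\<^sup>2)\<^sup>2)"
proof -
  define l r :: "nat \<times> nat \<Rightarrow> real"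
    where "l = (\<lambda>(i, j). lvec P i j)" and "r = (\<lambda>(i, j). rvec P i j)"
  define p q u v :: "nat \<times> nat \<Rightarrow> real"
    where "p = (\<lambda>(i, c). P 0 0 i c)" and "q = (\<lambda>(j, c). P 0 c j 0)"
      and "u = (\<lambda>(i, d). P i 0 0 d)" and "v = (\<lambda>(j, d). P j d 0 0)"
  have norm0: "0 \<le> hs_norm4 P"
    by (auto simp: hs_norm4_def intro!: infsum_nonneg split: prod.splits)
  have "(hs_norm4 P)\<^sup>2 \<le> \<eta>\<^sup>2"
    using power_mono[OF norm norm0] .
  then have hs: "sum_sq_le (\<lambda>(i, j, k, l). P i j k l) (\<eta>\<^sup>2)"
    using sum_sq_le_hs_norm4 P unfolding corner_tensor_def by (blast intro: sum_sq_le_mono)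
  have blocks: "sum_sq_le p (\<eta>\<^sup>2)" "sum_sq_le q (\<eta>\<^sup>2)" "sum_sq_le u (\<eta>\<^sup>2)" "sum_sq_le v (\<eta>\<^sup>2)"
    using sum_sq_le_comp_inj[OF hs, of "\<lambda>(i, c). (0, 0, i, c)"] sum_sq_le_comp_inj[OF hs, of "\<lambda>(j, c). (0, c, j, 0)"]
      sum_sq_le_comp_inj[OF hs, of "\<lambda>(i, d). (i, 0, 0, d)"] sum_sq_le_comp_inj[OF hs, of "\<lambda>(j, d). (j, d, 0, 0)"]
    by (auto simp: p_def q_def u_def v_def inj_def o_def split_def)
  have l: "vec_factorises l p q" and r: "vec_factorises r u v"
    unfolding l_def r_def p_def q_def u_def v_def
    using vec_factorises_lvec[OF P] vec_factorises_rvec[OF P] blocks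
    unfolding p_def q_def u_def v_def by blast+
  have lr00: "l (0, 0) = 0" "r (0, 0) = 0"
    by (simp_all add: l_def r_def lvec_def rvec_def)
  have \<eta>2: "\<eta>\<^sup>2 \<le> 1"
    using norm0 norm \<eta>1 power_le_one[of \<eta> 2] by linarith
  have B: "Bmat P = corner_op l r"
    unfolding l_def r_def by (rule Bmat_eq_corner_op)
  have minus_B: "(\<lambda>x z. - Bmat P x z) = corner_op (\<lambda>x. - l x) (\<lambda>x. - r x)"
    by (auto simp: fun_eq_iff B corner_op_def outer_def)
  have "2 * \<eta>\<^sup>2 \<le> (2 * \<eta>)\<^sup>2" "4 * exp 1 * (\<eta>\<^sup>2)\<^sup>2 = (2 * sqrt (exp 1) * \<eta>\<^sup>2)\<^sup>2"
    by (simp_all add: power_mult_distrib)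
  moreover have "factorisable_le (Bmat P) (2 * \<eta>\<^sup>2)"
    unfolding B by (rule factorisable_le_corner_op[OF l r blocks])
  moreover have "factorisable_le (exp_remainder (Bmat P)) (4 * exp 1 * (\<eta>\<^sup>2)\<^sup>2)"
    unfolding B by (rule factorisable_le_exp_remainder_corner_op[OF l r blocks lr00 \<eta>2])
  moreover have "factorisable_le (exp_remainder (\<lambda>x z. - Bmat P x z)) (4 * exp 1 * (\<eta>\<^sup>2)\<^sup>2)"
    unfolding minus_B
    by (rule factorisable_le_exp_remainder_corner_op[OF vec_factorises_uminus[OF l] vec_factorises_uminus[OF r]
          sum_sq_le_uminus[OF blocks(1)] blocks(2) sum_sq_le_uminus[OF blocks(3)] blocks(4) _ _ \<eta>2])
      (simp_all add: lr00)
  ultimately show "factorisable_le (Bmat P) ((2 * \<eta>)\<^sup>2)"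
    and "factorisable_le (exp_remainder (Bmat P)) ((2 * sqrt (exp 1) * \<eta>\<^sup>2)\<^sup>2)"
    and "factorisable_le (exp_remainder (\<lambda>x z. - Bmat P x z)) ((2 * sqrt (exp 1) * \<eta>\<^sup>2)\<^sup>2)"
    by (auto elim: factorisable_le_mono)
qed

theorem lemma1:
  fixes K :: real
  assumes "K > 0"
  shows "\<exists>K' > 0. \<exists>\<epsilon>0 > 0. \<forall>\<epsilon> P. 0 < \<epsilon> \<and> \<epsilon> \<le> \<epsilon>0 \<and> corner_tensor P \<and> hs_norm4 P \<le> K * \<epsilon> \<longrightarrow>
     (let B = Bmat P;
          C = (\<lambda>x z. mat_exp B x z - B x z - id_mat x z);
          Ct = (\<lambda>x z. mat_exp (\<lambda>x z. - B x z) x z + B x z - id_mat x z)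
      in (\<exists>Bu Bd. is_hs3 Bu \<and> is_hs3 Bd \<and> hs_norm3 Bu \<le> K' * \<epsilon> \<and> hs_norm3 Bd \<le> K' * \<epsilon>
                  \<and> factorises B Bu Bd)
       \<and> (\<exists>Cu Cd. is_hs3 Cu \<and> is_hs3 Cd \<and> hs_norm3 Cu \<le> K' * \<epsilon>\<^sup>2 \<and> hs_norm3 Cd \<le> K' * \<epsilon>\<^sup>2
                  \<and> factorises C Cu Cd)
       \<and> (\<exists>Cu Cd. is_hs3 Cu \<and> is_hs3 Cd \<and> hs_norm3 Cu \<le> K' * \<epsilon>\<^sup>2 \<and> hs_norm3 Cd \<le> K' * \<epsilon>\<^sup>2
                  \<and> factorises Ct Cu Cd))"
proof -
  define K' where "K' = 2 * K + 2 * sqrt (exp 1) * K\<^sup>2"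
  have K': "K' > 0"
    using assms by (simp add: K'_def add_pos_nonneg)
  have scale: "2 * (K * \<epsilon>) \<le> K' * \<epsilon>" "2 * sqrt (exp 1) * (K * \<epsilon>)\<^sup>2 \<le> K' * \<epsilon>\<^sup>2" if "\<epsilon> > 0" for \<epsilon>
    using assms that by (simp_all add: K'_def algebra_simps power_mult_distrib)
  have bounds: "factorisable_le (Bmat P) ((K' * \<epsilon>)\<^sup>2)
      \<and> factorisable_le (exp_remainder (Bmat P)) ((K' * \<epsilon>\<^sup>2)\<^sup>2)
      \<and> factorisable_le (exp_remainder (\<lambda>x z. - Bmat P x z)) ((K' * \<epsilon>\<^sup>2)\<^sup>2)"
    if "0 < \<epsilon>" "\<epsilon> \<le> 1 / K" "corner_tensor P" "hs_norm4 P \<le> K * \<epsilon>" for \<epsilon> P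
  proof -
    have "K * \<epsilon> \<le> 1"
      using that assms by (simp add: field_simps)
    moreover have "(2 * (K * \<epsilon>))\<^sup>2 \<le> (K' * \<epsilon>)\<^sup>2"
      using scale(1)[OF that(1)] assms that by (intro power_mono) auto
    moreover have "(2 * sqrt (exp 1) * (K * \<epsilon>)\<^sup>2)\<^sup>2 \<le> (K' * \<epsilon>\<^sup>2)\<^sup>2"
      using scale(2)[OF that(1)] by (intro power_mono) auto
    ultimately show ?thesis
      using corner_tensor_factorisable[OF that(3,4)] by (blast intro: factorisable_le_mono)
  qed
  show ?thesis
    unfolding Let_def
  proof (rule exI[of _ K'], rule conjI[OF K'], rule exI[of _ "1 / K"], intro conjI allI impI)
    show "1 / K > 0"
      using assms by simp
  qed (use bounds factorisable_le_hs_norm K' in \<open>auto simp: exp_remainder_def diff_minus_eq_add\<close>)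
qed

end
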